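(* Let $\varphi:[0,\infty)\to(0,\infty)$ be continuous and increasing with $\int_0^\infty\frac{\varphi(t)}{1+t^2}dt=\infty$. (i) If $\varphi$ is normally growing, then there is $c>0$ with $\int_0^a\frac{\varphi(x)}{x^2+1}dx\ge c\,\frac{\varphi(a)}{a}$ for all $a\ge1$. (ii) If $\varphi$ is rapidly growing, then there is $C>0$ with $\int_0^a\frac{\varphi(x)}{x^2+1}dx\le C\,\frac{\varphi(a)}{a}$ for all $a\ge1$.
   Context: $\varphi$ is normally growing if for some $A>0$ the function $\varphi(x)/x^2$ is decreasing on $[A,\infty)$ and $\varphi(x)$ is a convex function of $\log x$ on $[A,\infty)$; rapidly growing if for some $\varepsilon>0$ and $A>0$ the function $\varphi(x)/x^{1+\varepsilon}$ is increasing on $[A,\infty)$. *)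

theory Defs
  imports "HOL-Analysis.Analysis"
begin

definition normally_growing :: "(real \<Rightarrow> real) \<Rightarrow> bool" where
  "normally_growing \<phi> \<longleftrightarrow>
     (\<exists>A>0. antimono_on {A..} (\<lambda>x. \<phi> x / x\<^sup>2) \<and>
            convex_on {ln A..} (\<lambda>s. \<phi> (exp s)))"

definition rapidly_growing :: "(real \<Rightarrow> real) \<Rightarrow> bool" where
  "rapidly_growing \<phi> \<longleftrightarrow>
     (\<exists>\<epsilon>>0. \<exists>A>0. mono_on {A..} (\<lambda>x. \<phi> x / x powr (1 + \<epsilon>)))"

end

theory Submission
  imports Defs
begin

text \<open>
  For (i), the decrease of \<open>\<phi>(x)/x\<^sup>2\<close> gives \<open>\<phi>(2y) \<le> 4\<phi>(y)\<close> for large \<open>y\<close>, and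
  monotonicity extends this to a doubling bound \<open>\<phi>(2y) \<le> K\<phi>(y)\<close> for all \<open>y \<ge> 0\<close>. So on
  the dyadic block \<open>[a/2, a]\<close> the integrand is at least \<open>\<phi>(a)/(2Ka\<^sup>2)\<close>, which integrates
  to a multiple of \<open>\<phi>(a)/a\<close>.
  For (ii), with \<open>c = \<phi>(a)/a\<^bsup>1+\<epsilon>\<^esup>\<close> the integrand is at most \<open>c x\<^bsup>\<epsilon>-1\<^esup>\<close> on \<open>[B, a]\<close>
  (where \<open>B = max A 1\<close>), whose integral is at most \<open>\<phi>(a)/(\<epsilon> a)\<close>; the piece over \<open>[0, B]\<close> is
  controlled because \<open>\<phi>(x)/x\<close> increases on \<open>[A, \<infinity>)\<close>.
  Neither bound needs the divergence of the integral nor the convexity part of normal growth.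
\<close>

lemma integrable_on_div_sq_plus_one:
  fixes \<phi> :: "real \<Rightarrow> real"
  assumes "continuous_on {0..} \<phi>" and "0 \<le> u"
  shows "(\<lambda>x. \<phi> x / (x\<^sup>2 + 1)) integrable_on {u..v}"
proof (rule integrable_continuous_interval)
  have "continuous_on {u..v} \<phi>"
    using assms by (auto intro: continuous_on_subset)
  moreover have "x\<^sup>2 + 1 \<noteq> 0" for x :: real
    by (smt (verit) zero_le_power2)
  ultimately show "continuous_on {u..v} (\<lambda>x. \<phi> x / (x\<^sup>2 + 1))"
    by (intro continuous_intros) auto
qed

lemma integral_div_sq_plus_one_le:
  fixes \<phi> :: "real \<Rightarrow> real"
  assumes "continuous_on {0..} \<phi>" and pos: "\<And>t. t \<ge> 0 \<Longrightarrow> \<phi> t > 0"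
    and incr: "mono_on {0..} \<phi>" and "0 \<le> b"
  shows "integral {0..b} (\<lambda>x. \<phi> x / (x\<^sup>2 + 1)) \<le> b * \<phi> b"
proof -
  have "integral {0..b} (\<lambda>x. \<phi> x / (x\<^sup>2 + 1)) \<le> integral {0..b} (\<lambda>x. \<phi> b)"
  proof (rule integral_le)
    fix x assume x: "x \<in> {0..b}"
    have "\<phi> x / (x\<^sup>2 + 1) \<le> \<phi> x"
      using pos[of x] x by (simp add: divide_le_eq add_nonneg_pos)
    also have "\<phi> x \<le> \<phi> b"
      using incr x by (auto intro: mono_onD)
    finally show "\<phi> x / (x\<^sup>2 + 1) \<le> \<phi> b" .
  qed (use assms in \<open>auto intro: integrable_on_div_sq_plus_one\<close>)
  then show ?thesis
    using \<open>0 \<le> b\<close> by simp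
qed

lemma doubling_of_antimono_div_sq:
  fixes \<phi> :: "real \<Rightarrow> real"
  assumes anti: "antimono_on {A..} (\<lambda>x. \<phi> x / x\<^sup>2)" and "0 < A" "A \<le> y"
  shows "\<phi> (2 * y) \<le> 4 * \<phi> y"
proof -
  have "\<phi> (2 * y) / (2 * y)\<^sup>2 \<le> \<phi> y / y\<^sup>2"
    using assms by (intro monotone_onD[OF anti]) auto
  then show ?thesis
    using assms by (simp add: power_mult_distrib field_simps)
qed

lemma doubling_bound_of_antimono_div_sq:
  fixes \<phi> :: "real \<Rightarrow> real"
  assumes pos: "\<And>t. t \<ge> 0 \<Longrightarrow> \<phi> t > 0" and incr: "mono_on {0..} \<phi>"
    and anti: "antimono_on {A..} (\<lambda>x. \<phi> x / x\<^sup>2)" and "0 < A"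
  shows "\<exists>K>0. \<forall>y\<ge>0. \<phi> (2 * y) \<le> K * \<phi> y"
proof (intro exI conjI allI impI)
  let ?K = "max 4 (\<phi> (2 * A) / \<phi> 0)"
  show "?K > 0" by simp
  fix y :: real assume "y \<ge> 0"
  show "\<phi> (2 * y) \<le> ?K * \<phi> y"
  proof (cases "A \<le> y")
    case True
    then have "\<phi> (2 * y) \<le> 4 * \<phi> y"
      by (rule doubling_of_antimono_div_sq[OF anti \<open>0 < A\<close>])
    also have "\<dots> \<le> ?K * \<phi> y"
      using pos[OF \<open>y \<ge> 0\<close>] by (intro mult_right_mono) auto
    finally show ?thesis .
  next
    case False
    have "\<phi> (2 * y) \<le> \<phi> (2 * A)"
      using False \<open>y \<ge> 0\<close> \<open>0 < A\<close> by (intro mono_onD[OF incr]) auto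
    also have "\<dots> = \<phi> (2 * A) / \<phi> 0 * \<phi> 0"
      using pos[of 0] by simp
    also have "\<dots> \<le> ?K * \<phi> y"
      using pos[of 0] pos[of "2 * A"] \<open>y \<ge> 0\<close> \<open>0 < A\<close>
      by (intro mult_mono mono_onD[OF incr]) auto
    finally show ?thesis .
  qed
qed

lemma integral_div_sq_plus_one_ge_of_doubling:
  fixes \<phi> :: "real \<Rightarrow> real"
  assumes "continuous_on {0..} \<phi>" and pos: "\<And>t. t \<ge> 0 \<Longrightarrow> \<phi> t > 0"
    and incr: "mono_on {0..} \<phi>"
    and doubling: "\<And>y. y \<ge> 0 \<Longrightarrow> \<phi> (2 * y) \<le> K * \<phi> y" and "K > 0" and "1 \<le> a"
  shows "1 / (4 * K) * (\<phi> a / a) \<le> integral {0..a} (\<lambda>x. \<phi> x / (x\<^sup>2 + 1))"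
proof -
  let ?f = "\<lambda>x. \<phi> x / (x\<^sup>2 + 1)"
  have "1 / (4 * K) * (\<phi> a / a) \<le> \<phi> (a / 2) / (4 * a)"
    using doubling[of "a / 2"] \<open>K > 0\<close> \<open>1 \<le> a\<close> by (simp add: field_simps)
  also have "\<dots> = integral {a/2..a} (\<lambda>x. \<phi> (a / 2) / (2 * a\<^sup>2))"
    using \<open>1 \<le> a\<close> by (simp add: power2_eq_square)
  also have "\<dots> \<le> integral {a/2..a} ?f"
  proof (rule integral_le)
    fix x assume x: "x \<in> {a/2..a}"
    have "a\<^sup>2 + 1 \<le> 2 * a\<^sup>2" and "x\<^sup>2 \<le> a\<^sup>2"
      using x \<open>1 \<le> a\<close> one_le_power[of a 2] by (auto intro: power_mono)
    moreover have "\<phi> (a / 2) \<le> \<phi> x" "0 < \<phi> (a / 2)"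
      using x \<open>1 \<le> a\<close> pos by (auto intro: mono_onD[OF incr])
    ultimately show "\<phi> (a / 2) / (2 * a\<^sup>2) \<le> ?f x"
      by (intro frac_le) (auto simp: add_nonneg_pos)
  qed (use assms in \<open>auto intro: integrable_on_div_sq_plus_one\<close>)
  also have "\<dots> \<le> integral {0..a} ?f"
    using assms by (intro integral_subset_le)
      (auto intro!: integrable_on_div_sq_plus_one simp: add_nonneg_pos less_imp_le)
  finally show ?thesis .
qed

lemma mono_on_div_self_of_mono_on_div_powr:
  fixes \<phi> :: "real \<Rightarrow> real"
  assumes mon: "mono_on {A..} (\<lambda>x. \<phi> x / x powr (1 + e))"
    and "0 < A" "0 \<le> e" and nonneg: "\<And>t. t \<ge> A \<Longrightarrow> 0 \<le> \<phi> t"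
  shows "mono_on {A..} (\<lambda>x. \<phi> x / x)"
proof (rule monotone_onI)
  fix x y assume "x \<in> {A..}" "y \<in> {A..}" "x \<le> y"
  then have "x > 0" "y > 0"
    using \<open>0 < A\<close> by auto
  have "\<phi> x / x powr (1 + e) * x powr e \<le> \<phi> y / y powr (1 + e) * y powr e"
    using \<open>x \<in> {A..}\<close> \<open>y \<in> {A..}\<close> \<open>x \<le> y\<close> \<open>x > 0\<close> \<open>0 \<le> e\<close> nonneg
    by (intro mult_mono monotone_onD[OF mon] powr_mono2) auto
  then show "\<phi> x / x \<le> \<phi> y / y"
    using \<open>x > 0\<close> \<open>y > 0\<close> by (simp add: powr_add)
qed

lemma integral_div_sq_plus_one_tail_le:
  fixes \<phi> :: "real \<Rightarrow> real"
  assumes "continuous_on {0..} \<phi>" and pos: "\<And>t. t \<ge> 0 \<Longrightarrow> \<phi> t > 0"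
    and mon: "mono_on {A..} (\<lambda>x. \<phi> x / x powr (1 + e))"
    and "0 < e" "0 < A" "A \<le> B" "B \<le> a"
  shows "integral {B..a} (\<lambda>x. \<phi> x / (x\<^sup>2 + 1)) \<le> \<phi> a / (e * a)"
proof -
  define c where "c = \<phi> a / a powr (1 + e)"
  have "c \<ge> 0"
    using pos[of a] assms by (simp add: c_def less_imp_le)
  have powr_int: "((\<lambda>x. c * x powr (e - 1)) has_integral c * (a powr e / e)) {0..a}"
    using has_integral_powr_from_0[of "e - 1" a] assms by (intro has_integral_mult_right) auto
  have "integral {B..a} (\<lambda>x. \<phi> x / (x\<^sup>2 + 1)) \<le> integral {B..a} (\<lambda>x. c * x powr (e - 1))"
  proof (rule integral_le)
    fix x assume x: "x \<in> {B..a}"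
    then have "x > 0"
      using assms by auto
    have "\<phi> x / (x\<^sup>2 + 1) \<le> \<phi> x / x\<^sup>2"
      using pos[of x] \<open>x > 0\<close> by (intro divide_left_mono) (auto intro!: mult_pos_pos add_nonneg_pos)
    also have "\<dots> = \<phi> x / x powr (1 + e) * x powr (e - 1)"
      using \<open>x > 0\<close> by (simp add: powr_add powr_diff power2_eq_square)
    also have "\<dots> \<le> c * x powr (e - 1)"
      unfolding c_def using x assms by (intro mult_right_mono monotone_onD[OF mon]) auto
    finally show "\<phi> x / (x\<^sup>2 + 1) \<le> c * x powr (e - 1)" .
  next
    show "(\<lambda>x. c * x powr (e - 1)) integrable_on {B..a}"
      using powr_int assms by (auto intro: integrable_on_subinterval)
  qed (use assms in \<open>auto intro: integrable_on_div_sq_plus_one\<close>)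
  also have "\<dots> \<le> integral {0..a} (\<lambda>x. c * x powr (e - 1))"
    using powr_int assms \<open>c \<ge> 0\<close>
    by (intro integral_subset_le) (auto intro: integrable_on_subinterval)
  also have "\<dots> = \<phi> a / (e * a)"
    using integral_unique[OF powr_int] assms by (simp add: c_def powr_add)
  finally show ?thesis .
qed

lemma integral_div_sq_plus_one_le_of_mono_on_div_powr:
  fixes \<phi> :: "real \<Rightarrow> real"
  assumes cont: "continuous_on {0..} \<phi>" and pos: "\<And>t. t \<ge> 0 \<Longrightarrow> \<phi> t > 0"
    and "mono_on {0..} \<phi>"
    and mon: "mono_on {A..} (\<lambda>x. \<phi> x / x powr (1 + e))" and "0 < e" "0 < A" "1 \<le> a"
  shows "integral {0..a} (\<lambda>x. \<phi> x / (x\<^sup>2 + 1)) \<le> ((max A 1)\<^sup>2 + 1 / e) * (\<phi> a / a)"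
proof -
  let ?f = "\<lambda>x. \<phi> x / (x\<^sup>2 + 1)" and ?B = "max A 1"
  have "0 < \<phi> a / a"
    using pos[of a] \<open>1 \<le> a\<close> by simp
  show ?thesis
  proof (cases "a \<le> ?B")
    case True
    have "integral {0..a} ?f \<le> a * \<phi> a"
      using assms by (intro integral_div_sq_plus_one_le) auto
    also have "\<dots> = a\<^sup>2 * (\<phi> a / a)"
      using \<open>1 \<le> a\<close> by (simp add: power2_eq_square)
    also have "\<dots> \<le> ?B\<^sup>2 * (\<phi> a / a)"
      using True \<open>1 \<le> a\<close> \<open>0 < \<phi> a / a\<close> by (intro mult_right_mono power_mono) auto
    also have "\<dots> \<le> (?B\<^sup>2 + 1 / e) * (\<phi> a / a)"
      using \<open>0 < e\<close> \<open>0 < \<phi> a / a\<close> by (intro mult_right_mono) auto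
    finally show ?thesis .
  next
    case False
    have "integral {0..?B} ?f \<le> ?B * \<phi> ?B"
      using assms by (intro integral_div_sq_plus_one_le) auto
    also have "\<dots> = ?B\<^sup>2 * (\<phi> ?B / ?B)"
      by (simp add: power2_eq_square)
    also have "\<dots> \<le> ?B\<^sup>2 * (\<phi> a / a)"
      using False \<open>0 < e\<close> \<open>0 < A\<close>
      by (intro mult_left_mono monotone_onD[OF mono_on_div_self_of_mono_on_div_powr[OF mon]])
        (auto intro!: less_imp_le[OF pos])
    finally have head: "integral {0..?B} ?f \<le> ?B\<^sup>2 * (\<phi> a / a)" .
    have tail: "integral {?B..a} ?f \<le> 1 / e * (\<phi> a / a)"
      using False assms integral_div_sq_plus_one_tail_le[OF cont pos mon, of ?B a] by simp
    have "integral {0..a} ?f = integral {0..?B} ?f + integral {?B..a} ?f"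
      using False
      by (intro Henstock_Kurzweil_Integration.integral_combine[symmetric] integrable_on_div_sq_plus_one cont)
        auto
    also have "\<dots> \<le> (?B\<^sup>2 + 1 / e) * (\<phi> a / a)"
      using add_mono[OF head tail] by (simp only: distrib_right)
    finally show ?thesis .
  qed
qed

theorem lemma4:
  fixes \<phi> :: "real \<Rightarrow> real"
  assumes cont: "continuous_on {0..} \<phi>"
    and pos: "\<And>t. t \<ge> 0 \<Longrightarrow> \<phi> t > 0"
    and incr: "mono_on {0..} \<phi>"
    and div: "\<not> (\<lambda>t. \<phi> t / (1 + t\<^sup>2)) integrable_on {0..}"
  shows "(normally_growing \<phi> \<longrightarrow>
            (\<exists>c>0. \<forall>a\<ge>1. integral {0..a} (\<lambda>x. \<phi> x / (x\<^sup>2 + 1)) \<ge> c * (\<phi> a / a)))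
       \<and> (rapidly_growing \<phi> \<longrightarrow>
            (\<exists>C>0. \<forall>a\<ge>1. integral {0..a} (\<lambda>x. \<phi> x / (x\<^sup>2 + 1)) \<le> C * (\<phi> a / a)))"
proof (intro conjI impI)
  assume "normally_growing \<phi>"
  then obtain A where "0 < A" "antimono_on {A..} (\<lambda>x. \<phi> x / x\<^sup>2)"
    unfolding normally_growing_def by blast
  then obtain K where "K > 0" and doubling: "\<forall>y\<ge>0. \<phi> (2 * y) \<le> K * \<phi> y"
    using doubling_bound_of_antimono_div_sq[OF pos incr] by blast
  show "\<exists>c>0. \<forall>a\<ge>1. integral {0..a} (\<lambda>x. \<phi> x / (x\<^sup>2 + 1)) \<ge> c * (\<phi> a / a)"
    using integral_div_sq_plus_one_ge_of_doubling[OF cont pos incr] doubling \<open>K > 0\<close>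
    by (intro exI[of _ "1 / (4 * K)"]) auto
next
  assume "rapidly_growing \<phi>"
  then obtain e A where "0 < e" "0 < A" "mono_on {A..} (\<lambda>x. \<phi> x / x powr (1 + e))"
    unfolding rapidly_growing_def by blast
  then show "\<exists>C>0. \<forall>a\<ge>1. integral {0..a} (\<lambda>x. \<phi> x / (x\<^sup>2 + 1)) \<le> C * (\<phi> a / a)"
    using integral_div_sq_plus_one_le_of_mono_on_div_powr[OF cont pos incr]
    by (intro exI[of _ "(max A 1)\<^sup>2 + 1 / e"]) (auto intro: add_nonneg_pos)
qed

end
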